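(* Let $\mathbf d=(d_1,\ldots,d_n)$ be a degree sequence with $n\ge2$ and let $v\in[n]$. Then for every $1\le k\le n-1$, \[\mathbb P(\mathfrak s_n(v)>k)=\frac{1}{\langle n\rangle_k}\sum_{(i_1,\ldots,i_k)\in J_{n,k}(v)}\ \prod_{j=1}^k d_{i_j},\] where $\langle n\rangle_k=n!/(n-k)!$ and $J_{n,k}(v)=\{(j_1,\ldots,j_k)\in([n]\setminus\{v\})^k: j_\ell\ne j_m\text{ for }\ell\ne m\}$.
   Context: A degree sequence is $\mathbf d=(d_1,\ldots,d_n)\in\mathbb N_0^n$ with $\sum_j d_j=n$. Let $\mathfrak F(\mathbf d)=\{f:[n]\to[n]: |f^{-1}(\{i\})|=d_i\ \forall i\}$ and let $F$ be uniform on $\mathfrak F(\mathbf d)$. For $f:V\to V$, $v\in V$, the six-length is $\mathfrak s_f(v)=\min\{k\in\mathbb N: f^{(k)}(v)\in\{f^{(j)}(v):0\le j\le k-1\}\}$ ($f^{(k)}$ the $k$-fold composition, $f^{(0)}=\mathrm{id}$); $\mathfrak s_n(v)=\mathfrak s_F(v)$. *)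

theory Defs
  imports "HOL-Probability.Probability"
begin

text \<open>Vertex set [n] = {1..n}. A degree sequence is d :: nat => nat with
  sum over {1..n} equal to n (values outside {1..n} are irrelevant).\<close>

definition degree_seq :: "nat \<Rightarrow> (nat \<Rightarrow> nat) \<Rightarrow> bool" where
  "degree_seq n d \<longleftrightarrow> (\<Sum>i\<in>{1..n}. d i) = n"

definition maps_deg :: "nat \<Rightarrow> (nat \<Rightarrow> nat) \<Rightarrow> (nat \<Rightarrow> nat) set" where
  "maps_deg n d = {f \<in> {1..n} \<rightarrow>\<^sub>E {1..n}. \<forall>i\<in>{1..n}. card {j\<in>{1..n}. f j = i} = d i}"

definition six_length :: "('a \<Rightarrow> 'a) \<Rightarrow> 'a \<Rightarrow> nat" where
  "six_length f v = (LEAST k. k \<ge> 1 \<and> (f ^^ k) v \<in> {(f ^^ j) v | j. j \<le> k - 1})"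

definition J_tuples :: "nat \<Rightarrow> nat \<Rightarrow> nat \<Rightarrow> nat list set" where
  "J_tuples n k v = {xs. length xs = k \<and> set xs \<subseteq> {1..n} - {v} \<and> distinct xs}"

end

theory Submission
  imports Defs "HOL-Combinatorics.Transposition"
begin

text \<open>
  The event \<open>six_length f v > k\<close> says that \<open>v, f v, \<dots>, f\<^sup>k v\<close> are distinct, i.e. that the
  path \<open>(f v, \<dots>, f\<^sup>k v)\<close> is one of the tuples \<open>(x\<^sub>1, \<dots>, x\<^sub>k)\<close> of \<open>J_tuples n k v\<close>. These
  events are disjoint, and the one for a fixed tuple consists of the maps sending
  \<open>v \<mapsto> x\<^sub>1, x\<^sub>1 \<mapsto> x\<^sub>2, \<dots>, x\<^sub>k\<^sub>-\<^sub>1 \<mapsto> x\<^sub>k\<close>. Such maps are counted one arrow at a time. Among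
  the maps already prescribed on \<open>m\<close> distinct points with distinct images, precomposing
  with a transposition of two free points shows that each of the \<open>n - m\<close> free points is
  sent to a fresh target \<open>y\<close> equally often, while each such map has exactly \<open>d y\<close> free
  preimages of \<open>y\<close>. So every arrow multiplies the count by \<open>d y / (n - m)\<close>.
\<close>

lemma ex_PiE_fiber_card:
  assumes "finite A" and "finite B" and "(\<Sum>i\<in>B. d i) = card A"
  shows "\<exists>f \<in> A \<rightarrow>\<^sub>E B. \<forall>i\<in>B. card {a\<in>A. f a = i} = d i"
  using assms(2,1,3)
proof (induction B arbitrary: A rule: finite_induct)
  case empty
  then show ?case by (intro bexI[of _ "\<lambda>_. undefined"]) auto
next
  case (insert b B)
  have "d b \<le> card A" using insert by simp
  then obtain C where C: "C \<subseteq> A" "card C = d b" "finite C"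
    by (rule obtain_subset_with_card_n)
  have "card (A - C) = (\<Sum>i\<in>B. d i)"
    using insert C by (simp add: card_Diff_subset)
  then obtain g where g: "g \<in> (A - C) \<rightarrow>\<^sub>E B" "\<forall>i\<in>B. card {a\<in>A - C. g a = i} = d i"
    using insert.IH[of "A - C"] insert.prems by auto
  define f where "f a = (if a \<in> C then b else g a)" for a
  have "f \<in> A \<rightarrow>\<^sub>E insert b B"
    using g C by (auto simp: f_def PiE_def Pi_def extensional_def)
  moreover have "card {a\<in>A. f a = i} = d i" if i: "i \<in> insert b B" for i
  proof (cases "i = b")
    case True
    have "{a\<in>A. f a = i} = C" using g C True insert.hyps by (auto simp: f_def PiE_def Pi_def)
    then show ?thesis using C True by simp
  next
    case False
    then have "{a\<in>A. f a = i} = {a\<in>A - C. g a = i}" by (auto simp: f_def)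
    then show ?thesis using g False i by auto
  qed
  ultimately show ?case by blast
qed

lemma maps_deg_nonempty: "degree_seq n d \<Longrightarrow> maps_deg n d \<noteq> {}"
  using ex_PiE_fiber_card[of "{1..n}" "{1..n}" d] by (auto simp: degree_seq_def maps_deg_def)

lemma finite_maps_deg: "finite (maps_deg n d)"
  by (rule finite_subset[of _ "{1..n} \<rightarrow>\<^sub>E {1..n}"]) (auto simp: maps_deg_def finite_PiE)

lemma maps_deg_funcset: "f \<in> maps_deg n d \<Longrightarrow> f \<in> {1..n} \<rightarrow> {1..n}"
  by (auto simp: maps_deg_def)

lemma maps_deg_fiber_card: "f \<in> maps_deg n d \<Longrightarrow> i \<in> {1..n} \<Longrightarrow> card {j\<in>{1..n}. f j = i} = d i"
  by (auto simp: maps_deg_def)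

lemma maps_deg_comp_transpose:
  assumes f: "f \<in> maps_deg n d" and "a \<in> {1..n}" and "b \<in> {1..n}"
  shows "f \<circ> Transposition.transpose a b \<in> maps_deg n d"
proof -
  have "f \<circ> Transposition.transpose a b \<in> {1..n} \<rightarrow>\<^sub>E {1..n}"
    using f assms by (auto simp: maps_deg_def PiE_def Pi_def extensional_def Transposition.transpose_def)
  moreover have "card {j\<in>{1..n}. (f \<circ> Transposition.transpose a b) j = i} = d i" if "i \<in> {1..n}" for i
  proof -
    have "{j\<in>{1..n}. (f \<circ> Transposition.transpose a b) j = i} = Transposition.transpose a b ` {j\<in>{1..n}. f j = i}"
      using assms by (force simp: Transposition.transpose_def)
    then show ?thesis
      using maps_deg_fiber_card[OF f that] by (simp add: card_image inj_on_subset)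
  qed
  ultimately show ?thesis by (auto simp: maps_deg_def)
qed

definition maps_sending :: "nat \<Rightarrow> (nat \<Rightarrow> nat) \<Rightarrow> nat list \<Rightarrow> nat list \<Rightarrow> (nat \<Rightarrow> nat) set" where
  "maps_sending n d xs ys = {f \<in> maps_deg n d. map f xs = ys}"

lemma finite_maps_sending: "finite (maps_sending n d xs ys)"
  using finite_maps_deg by (rule finite_subset[rotated]) (auto simp: maps_sending_def)

lemma maps_sending_comp_transpose:
  assumes "f \<in> maps_sending n d xs ys" and "a \<in> {1..n} - set xs" and "b \<in> {1..n} - set xs"
  shows "f \<circ> Transposition.transpose a b \<in> maps_sending n d xs ys"
proof -
  have "map (f \<circ> Transposition.transpose a b) xs = map f xs"
    using assms(2,3) by (intro map_cong) (auto simp: Transposition.transpose_def)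
  then show ?thesis
    using assms maps_deg_comp_transpose by (auto simp: maps_sending_def)
qed

lemma card_maps_sending_value_eq:
  assumes "a \<in> {1..n} - set xs" and "b \<in> {1..n} - set xs"
  shows "card {f \<in> maps_sending n d xs ys. f a = y} = card {f \<in> maps_sending n d xs ys. f b = y}"
proof (rule bij_betw_same_card[of "\<lambda>f. f \<circ> Transposition.transpose a b"],
       rule bij_betw_byWitness[where f' = "\<lambda>f. f \<circ> Transposition.transpose a b"])
  show "(\<lambda>f. f \<circ> Transposition.transpose a b) ` {f \<in> maps_sending n d xs ys. f a = y}
          \<subseteq> {f \<in> maps_sending n d xs ys. f b = y}"
    using assms maps_sending_comp_transpose by auto
  show "(\<lambda>f. f \<circ> Transposition.transpose a b) ` {f \<in> maps_sending n d xs ys. f b = y}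
          \<subseteq> {f \<in> maps_sending n d xs ys. f a = y}"
    using assms maps_sending_comp_transpose by auto
qed (simp_all add: comp_assoc)

lemma card_fiber_outside_sources:
  assumes "f \<in> maps_sending n d xs ys" and "y \<in> {1..n}" and "y \<notin> set ys"
  shows "card {z \<in> {1..n} - set xs. f z = y} = d y"
proof -
  have "f ` set xs = set ys"
    using assms(1) by (auto simp: maps_sending_def simp flip: set_map)
  then have "{z \<in> {1..n} - set xs. f z = y} = {z \<in> {1..n}. f z = y}"
    using assms(3) by auto
  then show ?thesis
    using assms(1,2) maps_deg_fiber_card by (simp add: maps_sending_def)
qed

lemma card_maps_sending_snoc:
  assumes "distinct (xs @ [x])" and "set (xs @ [x]) \<subseteq> {1..n}"
    and "y \<in> {1..n}" and "y \<notin> set ys"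
  shows "card (maps_sending n d (xs @ [x]) (ys @ [y])) * (n - length xs)
       = card (maps_sending n d xs ys) * d y"
proof -
  define S where "S = maps_sending n d xs ys"
  define R where "R = {1..n} - set xs"
  have x: "x \<in> R" using assms(1,2) by (auto simp: R_def)
  have "maps_sending n d (xs @ [x]) (ys @ [y]) = {f \<in> S. f x = y}"
    by (auto simp: S_def maps_sending_def)
  moreover have "card R = n - length xs"
    using assms(1,2) by (simp add: R_def card_Diff_subset distinct_card)
  moreover have "card R * card {f \<in> S. f x = y} = (\<Sum>z\<in>R. card {f \<in> S. f z = y})"
  proof -
    have "card {f \<in> S. f z = y} = card {f \<in> S. f x = y}" if "z \<in> R" for z
      using that x unfolding S_def R_def by (rule card_maps_sending_value_eq)
    then show ?thesis by simp
  qed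
  moreover have "(\<Sum>z\<in>R. card {f \<in> S. f z = y}) = (\<Sum>f\<in>S. card {z \<in> R. f z = y})"
  proof -
    have "(\<Sum>z\<in>R. card {f \<in> S. f z = y}) = (\<Sum>z\<in>R. \<Sum>f\<in>S. if f z = y then 1 else 0)"
      by (simp add: S_def finite_maps_sending flip: sum.inter_filter)
    also have "\<dots> = (\<Sum>f\<in>S. \<Sum>z\<in>R. if f z = y then 1 else 0)"
      by (rule sum.swap)
    also have "\<dots> = (\<Sum>f\<in>S. card {z \<in> R. f z = y})"
      by (simp add: R_def flip: sum.inter_filter)
    finally show ?thesis .
  qed
  moreover have "(\<Sum>f\<in>S. card {z \<in> R. f z = y}) = card S * d y"
    using card_fiber_outside_sources assms(3,4) by (simp add: S_def R_def)
  ultimately show ?thesis by (simp add: S_def mult.commute)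
qed

lemma card_maps_sending:
  assumes "distinct xs" and "set xs \<subseteq> {1..n}" and "distinct ys" and "set ys \<subseteq> {1..n}"
    and "length xs = length ys"
  shows "card (maps_sending n d xs ys) * fact n
       = card (maps_deg n d) * fact (n - length xs) * (\<Prod>y\<leftarrow>ys. d y)"
  using assms
proof (induction xs arbitrary: ys rule: rev_induct)
  case Nil
  then show ?case by (simp add: maps_sending_def)
next
  case (snoc x xs)
  then obtain ys' y where ys: "ys = ys' @ [y]"
    by (cases ys rule: rev_cases) auto
  define m where "m = length xs"
  define c where "c = card (maps_sending n d xs ys')"
  define M where "M = card (maps_deg n d)"
  have "Suc m = card (set (xs @ [x]))"
    using distinct_card[OF snoc.prems(1)] by (simp add: m_def)
  also have "\<dots> \<le> card {1..n}"
    using snoc.prems(2) by (intro card_mono) auto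
  finally have "Suc m \<le> n" by simp
  then have "n - m = Suc (n - Suc m)" by simp
  then have fact_m: "fact (n - m) = (n - m) * fact (n - Suc m)"
    by (metis fact_Suc of_nat_id)
  have IH: "c * fact n = M * fact (n - m) * (\<Prod>y\<leftarrow>ys'. d y)"
    using snoc ys by (simp add: m_def c_def M_def)
  have step: "card (maps_sending n d (xs @ [x]) ys) * (n - m) = c * d y"
    unfolding m_def c_def ys by (rule card_maps_sending_snoc) (use snoc.prems ys in auto)
  have "card (maps_sending n d (xs @ [x]) ys) * fact n * (n - m) = c * fact n * d y"
    by (simp add: step flip: mult.assoc mult.commute[of _ "n - m"])
  also have "\<dots> = M * fact (n - Suc m) * (\<Prod>y\<leftarrow>ys. d y) * (n - m)"
    by (simp add: IH fact_m ys mult_ac)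
  finally show ?case
    using \<open>Suc m \<le> n\<close> by (simp add: m_def M_def)
qed

lemma less_Least_iff:
  fixes k :: "'a :: wellorder"
  assumes "\<exists>m. P m"
  shows "k < (LEAST m. P m) \<longleftrightarrow> \<not> (\<exists>m\<le>k. P m)"
  using assms by (metis LeastI_ex not_less_Least le_less_trans not_le)

lemma six_length_eq_Least_repeat:
  "six_length f v = (LEAST m. \<exists>j<m. (f ^^ m) v = (f ^^ j) v)"
  unfolding six_length_def
proof (rule arg_cong[where f = Least], rule ext)
  fix m
  show "(1 \<le> m \<and> (f ^^ m) v \<in> {(f ^^ j) v |j. j \<le> m - 1}) \<longleftrightarrow> (\<exists>j<m. (f ^^ m) v = (f ^^ j) v)"
  proof
    assume "1 \<le> m \<and> (f ^^ m) v \<in> {(f ^^ j) v |j. j \<le> m - 1}"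
    then obtain j where "1 \<le> m" "j \<le> m - 1" "(f ^^ m) v = (f ^^ j) v" by auto
    then show "\<exists>j<m. (f ^^ m) v = (f ^^ j) v" by (intro exI[of _ j]) auto
  qed force
qed

lemma ex_repeat_iff_not_inj_on:
  "(\<exists>m\<le>k. \<exists>j<m. g m = g j) \<longleftrightarrow> \<not> inj_on g {0..(k::nat)}"
proof
  assume "\<exists>m\<le>k. \<exists>j<m. g m = g j"
  then obtain m j where "j < m" "m \<le> k" "g m = g j" by blast
  then have "j \<in> {0..k}" "m \<in> {0..k}" "j \<noteq> m" by auto
  with \<open>g m = g j\<close> show "\<not> inj_on g {0..k}" by (metis inj_onD)
next
  assume "\<not> inj_on g {0..k}"
  then obtain a b where ab: "a \<le> k" "b \<le> k" "a \<noteq> b" "g a = g b"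
    by (auto simp: inj_on_def)
  show "\<exists>m\<le>k. \<exists>j<m. g m = g j"
  proof (cases "a < b")
    case True
    with ab show ?thesis by (intro exI[of _ b]) (auto intro!: exI[of _ a])
  next
    case False
    with ab show ?thesis by (intro exI[of _ a]) (auto intro!: exI[of _ b])
  qed
qed

lemma six_length_gt_iff_inj_on:
  assumes "finite (range (\<lambda>j. (f ^^ j) v))"
  shows "k < six_length f v \<longleftrightarrow> inj_on (\<lambda>j. (f ^^ j) v) {0..k}"
proof -
  have "\<not> inj (\<lambda>j. (f ^^ j) v)"
    using assms finite_imageD infinite_UNIV_nat by blast
  then obtain i j where "i \<noteq> j" "(f ^^ i) v = (f ^^ j) v"
    by (auto simp: inj_def)
  moreover have "i \<in> {0..max i j}" "j \<in> {0..max i j}"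
    by auto
  ultimately have "\<not> inj_on (\<lambda>j. (f ^^ j) v) {0..max i j}"
    by (metis inj_onD)
  then have "\<exists>m. \<exists>j<m. (f ^^ m) v = (f ^^ j) v"
    using ex_repeat_iff_not_inj_on[of "max i j" "\<lambda>j. (f ^^ j) v"] by blast
  then show ?thesis
    using ex_repeat_iff_not_inj_on[of k "\<lambda>j. (f ^^ j) v"]
    by (simp add: six_length_eq_Least_repeat less_Least_iff)
qed

lemma funpow_in_funcset: "f \<in> A \<rightarrow> A \<Longrightarrow> v \<in> A \<Longrightarrow> (f ^^ j) v \<in> A"
  by (induction j) auto

lemma six_length_gt_iff_J_tuples:
  assumes "f \<in> {1..n} \<rightarrow> {1..n}" and "v \<in> {1..n}"
  shows "k < six_length f v \<longleftrightarrow> map (\<lambda>j. (f ^^ Suc j) v) [0..<k] \<in> J_tuples n k v"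
proof -
  define g where "g = (\<lambda>j. (f ^^ j) v)"
  have orbit: "g j \<in> {1..n}" for j
    using funpow_in_funcset[OF assms] by (simp add: g_def)
  have "finite (range g)"
    using orbit by (auto intro: finite_subset[of _ "{1..n}"])
  then have "k < six_length f v \<longleftrightarrow> distinct (map g [0..<Suc k])"
    by (simp add: six_length_gt_iff_inj_on g_def distinct_map atLeastLessThanSuc_atLeastAtMost
        del: upt_Suc)
  also have "map g [0..<Suc k] = v # map (\<lambda>j. g (Suc j)) [0..<k]"
    by (simp add: g_def upt_conv_Cons map_Suc_upt[symmetric] del: upt_Suc)
  finally show ?thesis
    using orbit by (auto simp: J_tuples_def g_def image_iff simp del: funpow.simps)
qed

lemma map_eq_orbit_path_iff:
  assumes "xs \<noteq> []"
  shows "map f (v # butlast xs) = xs \<longleftrightarrow> xs = map (\<lambda>j. (f ^^ Suc j) v) [0..<length xs]"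
  using assms
proof (induction xs arbitrary: v rule: list_nonempty_induct)
  case (single x)
  then show ?case by auto
next
  case (cons x xs)
  have "map f (v # butlast (x # xs)) = x # xs \<longleftrightarrow> f v = x \<and> map f (x # butlast xs) = xs"
    using cons.hyps by simp
  also have "\<dots> \<longleftrightarrow> f v = x \<and> xs = map (\<lambda>j. (f ^^ Suc j) x) [0..<length xs]"
    using cons.IH by simp
  also have "\<dots> \<longleftrightarrow> x # xs = map (\<lambda>j. (f ^^ Suc j) v) [0..<length (x # xs)]"
    by (cases "x = f v") (simp_all add: map_upt_Suc funpow_swap1[symmetric] del: upt_Suc)
  finally show ?case .
qed

lemma six_length_gt_eq_UN_maps_sending:
  assumes "v \<in> {1..n}" and "1 \<le> k"
  shows "maps_deg n d \<inter> {f. k < six_length f v}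
       = (\<Union>xs\<in>J_tuples n k v. maps_sending n d (v # butlast xs) xs)"
proof -
  define path where "path f = map (\<lambda>j. (f ^^ Suc j) v) [0..<k]" for f :: "nat \<Rightarrow> nat"
  have sending_iff: "f \<in> maps_sending n d (v # butlast xs) xs \<longleftrightarrow> f \<in> maps_deg n d \<and> xs = path f"
    if "xs \<in> J_tuples n k v" for f xs
  proof -
    have "xs \<noteq> []" "length xs = k"
      using that assms(2) by (auto simp: J_tuples_def)
    then show ?thesis
      using map_eq_orbit_path_iff[of xs f v] by (simp add: maps_sending_def path_def)
  qed
  have six_iff: "f \<in> maps_deg n d \<Longrightarrow> k < six_length f v \<longleftrightarrow> path f \<in> J_tuples n k v" for f
    unfolding path_def using maps_deg_funcset assms(1) by (rule six_length_gt_iff_J_tuples)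
  show ?thesis
  proof (intro set_eqI iffI)
    fix f
    assume "f \<in> maps_deg n d \<inter> {f. k < six_length f v}"
    then have "f \<in> maps_deg n d" "path f \<in> J_tuples n k v"
      using six_iff by auto
    then show "f \<in> (\<Union>xs\<in>J_tuples n k v. maps_sending n d (v # butlast xs) xs)"
      using sending_iff[of "path f" f] by auto
  next
    fix f
    assume "f \<in> (\<Union>xs\<in>J_tuples n k v. maps_sending n d (v # butlast xs) xs)"
    then obtain xs where "xs \<in> J_tuples n k v" "f \<in> maps_sending n d (v # butlast xs) xs"
      by blast
    then show "f \<in> maps_deg n d \<inter> {f. k < six_length f v}"
      using sending_iff six_iff by auto
  qed
qed

lemma finite_J_tuples: "finite (J_tuples n k v)"
  by (rule finite_subset[of _ "{xs. set xs \<subseteq> {1..n} \<and> length xs = k}"])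
     (auto simp: J_tuples_def finite_lists_length_eq)

lemma maps_sending_paths_disjoint:
  assumes "xs \<in> J_tuples n k v" and "ys \<in> J_tuples n k v" and "xs \<noteq> ys" and "1 \<le> k"
  shows "maps_sending n d (v # butlast xs) xs \<inter> maps_sending n d (v # butlast ys) ys = {}"
proof -
  have ne: "xs \<noteq> []" "ys \<noteq> []" and len: "length xs = length ys"
    using assms by (auto simp: J_tuples_def)
  have "xs = ys"
    if "f \<in> maps_sending n d (v # butlast xs) xs" "f \<in> maps_sending n d (v # butlast ys) ys" for f
    using that map_eq_orbit_path_iff[OF ne(1), of f v] map_eq_orbit_path_iff[OF ne(2), of f v] len
    by (simp add: maps_sending_def)
  then show ?thesis
    using assms(3) by blast
qed

lemma card_maps_sending_path:
  assumes "xs \<in> J_tuples n k v" and "v \<in> {1..n}" and "1 \<le> k"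
  shows "card (maps_sending n d (v # butlast xs) xs) * fact n
       = card (maps_deg n d) * fact (n - k) * (\<Prod>j<k. d (xs ! j))"
proof -
  have xs: "length xs = k" "distinct xs" "set xs \<subseteq> {1..n} - {v}"
    using assms(1) by (auto simp: J_tuples_def)
  have butlast: "set (butlast xs) \<subseteq> set xs"
    by (auto dest: in_set_butlastD)
  have "card (maps_sending n d (v # butlast xs) xs) * fact n
      = card (maps_deg n d) * fact (n - length (v # butlast xs)) * (\<Prod>y\<leftarrow>xs. d y)"
  proof (rule card_maps_sending)
    show "distinct (v # butlast xs)"
      using xs(2,3) butlast by (auto simp: distinct_butlast)
    show "set (v # butlast xs) \<subseteq> {1..n}"
      using xs(3) butlast assms(2) by auto
    show "length (v # butlast xs) = length xs"
      using xs(1) assms(3) by simp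
  qed (use xs in auto)
  moreover have "(\<Prod>y\<leftarrow>xs. d y) = (\<Prod>j<k. d (xs ! j))"
    using xs(1) by (simp add: prod.list_conv_set_nth lessThan_atLeast0)
  moreover have "length (v # butlast xs) = k"
    using xs(1) assms(3) by simp
  ultimately show ?thesis
    by (simp only:)
qed

theorem lemma3p2:
  fixes n k v :: nat and d :: "nat \<Rightarrow> nat"
  assumes "degree_seq n d" and "n \<ge> 2" and "v \<in> {1..n}"
    and "1 \<le> k" and "k \<le> n - 1"
  shows "measure_pmf.prob (pmf_of_set (maps_deg n d)) {f. six_length f v > k}
       = (1 / (fact n / fact (n - k))) *
         (\<Sum>xs\<in>J_tuples n k v. \<Prod>j<k. real (d (xs ! j)))"
proof -
  define M where "M = maps_deg n d"
  define S where "S xs = maps_sending n d (v # butlast xs) xs" for xs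
  have "M \<noteq> {}" and "finite M"
    using maps_deg_nonempty[OF assms(1)] finite_maps_deg by (simp_all add: M_def)
  have "card (M \<inter> {f. k < six_length f v}) = (\<Sum>xs\<in>J_tuples n k v. card (S xs))"
    unfolding M_def S_def six_length_gt_eq_UN_maps_sending[OF assms(3,4)]
    using maps_sending_paths_disjoint[OF _ _ _ assms(4)]
    by (intro card_UN_disjoint finite_J_tuples) (auto simp: finite_maps_sending)
  moreover have "real (card (S xs)) / real (card M) = fact (n - k) / fact n * (\<Prod>j<k. real (d (xs ! j)))"
    if "xs \<in> J_tuples n k v" for xs
  proof -
    have "real (card (S xs)) * fact n = real (card M) * fact (n - k) * (\<Prod>j<k. real (d (xs ! j)))"
      using arg_cong[OF card_maps_sending_path[OF that assms(3,4), of d], of real]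
      by (simp add: S_def M_def of_nat_fact)
    then show ?thesis
      using \<open>M \<noteq> {}\<close> \<open>finite M\<close> by (simp add: field_simps)
  qed
  ultimately have "measure_pmf.prob (pmf_of_set M) {f. k < six_length f v}
      = (\<Sum>xs\<in>J_tuples n k v. fact (n - k) / fact n * (\<Prod>j<k. real (d (xs ! j))))"
    using \<open>M \<noteq> {}\<close> \<open>finite M\<close> by (simp add: measure_pmf_of_set sum_divide_distrib)
  then show ?thesis
    by (simp add: M_def sum_distrib_left)
qed

end
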